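(* Let $A=(A_n(x))_{n\ge0}$ be an Appell sequence with exponential generating function $\sum_{k\ge0}A_k(x)t^k/k!=e^{xt}f_A(t)$, and write $\log f_A(t)=\sum_{k\ge1}c_k t^k/k!$. Let $\varphi_A:\Lambda\to\mathbb{R}[x]$ be the ring homomorphism with $\varphi_A(h_m)=A_m/m!$ for $m\ge1$. Then $\varphi_A(p_1)=x+c_1$ and $\varphi_A(p_n)=c_n/(n-1)!$ for all $n\ge2$.
   Context: An Appell sequence is a sequence of real polynomials $(A_n)_{n\ge0}$ with $A_0=1$ and $A_n'=nA_{n-1}$ for $n\ge1$; then $f_A(t)=\sum_k A_k(0)t^k/k!$ is a formal power series with $f_A(0)=1$. $\Lambda$ is the ring of symmetric functions, freely generated by the complete homogeneous symmetric functions $h_m$; $p_n=\sum_i x_i^n$ is the $n$-th power sum symmetric function. *)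

theory Defs
  imports "HOL-Library.Poly_Mapping" "HOL-Computational_Algebra.Computational_Algebra"
begin

definition appell :: "(nat \<Rightarrow> real poly) \<Rightarrow> bool" where
  "appell A \<longleftrightarrow> A 0 = 1 \<and> (\<forall>n\<ge>1. pderiv (A n) = smult (real n) (A (n - 1)))"

definition appell_f :: "(nat \<Rightarrow> real poly) \<Rightarrow> real fps" where
  "appell_f A = Abs_fps (\<lambda>k. poly (A k) 0 / fact k)"

text \<open>Formal logarithm of a power series F with F(0) = 1: log F = log(1 + (F - 1)).\<close>
definition fps_log1 :: "real fps \<Rightarrow> real fps" where
  "fps_log1 F = fps_ln 1 oo (F - 1)"

definition appell_c :: "(nat \<Rightarrow> real poly) \<Rightarrow> nat \<Rightarrow> real" where
  "appell_c A k = fact k * (fps_log1 (appell_f A) $ k)"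

text \<open>Formal power series with integer coefficients in countably many variables x_0, x_1, ...;
  a monomial is a finitely supported exponent vector.\<close>
type_synonym sfun = "(nat \<Rightarrow>\<^sub>0 nat) \<Rightarrow> int"

definition mdeg :: "(nat \<Rightarrow>\<^sub>0 nat) \<Rightarrow> nat" where
  "mdeg \<alpha> = (\<Sum>i\<in>Poly_Mapping.keys \<alpha>. Poly_Mapping.lookup \<alpha> i)"

definition sf_one :: sfun where
  "sf_one \<alpha> = (if \<alpha> = 0 then 1 else 0)"

definition sf_add :: "sfun \<Rightarrow> sfun \<Rightarrow> sfun" where
  "sf_add f g \<alpha> = f \<alpha> + g \<alpha>"

definition sf_mult :: "sfun \<Rightarrow> sfun \<Rightarrow> sfun" where
  "sf_mult f g \<alpha> = (\<Sum>(\<beta>, \<gamma>) \<in> {(\<beta>, \<gamma>). \<beta> + \<gamma> = \<alpha>}. f \<beta> * g \<gamma>)"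

definition sf_symmetric :: "sfun \<Rightarrow> bool" where
  "sf_symmetric f \<longleftrightarrow> (\<forall>\<sigma>::nat \<Rightarrow> nat. bij \<sigma> \<longrightarrow>
     (\<forall>\<alpha> \<beta>. (\<forall>i. Poly_Mapping.lookup \<beta> i = Poly_Mapping.lookup \<alpha> (\<sigma> i)) \<longrightarrow> f \<beta> = f \<alpha>))"

definition sf_bounded_degree :: "sfun \<Rightarrow> bool" where
  "sf_bounded_degree f \<longleftrightarrow> (\<exists>d. \<forall>\<alpha>. f \<alpha> \<noteq> 0 \<longrightarrow> mdeg \<alpha> \<le> d)"

definition Lambda :: "sfun set" where
  "Lambda = {f. sf_symmetric f \<and> sf_bounded_degree f}"

definition sf_h :: "nat \<Rightarrow> sfun" where
  "sf_h m \<alpha> = (if mdeg \<alpha> = m then 1 else 0)"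

definition sf_p :: "nat \<Rightarrow> sfun" where
  "sf_p n \<alpha> = (if \<exists>i. \<alpha> = Poly_Mapping.single i n then 1 else 0)"

definition ring_hom_Lambda :: "(sfun \<Rightarrow> 'b::ring_1) \<Rightarrow> bool" where
  "ring_hom_Lambda \<phi> \<longleftrightarrow> \<phi> sf_one = 1 \<and>
     (\<forall>f\<in>Lambda. \<forall>g\<in>Lambda. \<phi> (sf_add f g) = \<phi> f + \<phi> g \<and> \<phi> (sf_mult f g) = \<phi> f * \<phi> g)"

end

theory Submission
  imports Defs
begin

text \<open>Let H(t) = \<Sum>_m \<phi>(h_m) t^m. Newton's identity m h_m = \<Sum>_{i=1..m} p_i h_{m-i}
  says that H' = P H with P(t) = \<Sum>_j \<phi>(p_{j+1}) t^j. On the other hand H is the exponential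
  generating function \<Sum>_m A_m t^m / m! = e^{xt} f_A(t) of the Appell sequence, whose logarithmic
  derivative is x + (log f_A)'. As H(0) = 1, H can be cancelled, so P = x + (log f_A)', and
  comparing coefficients gives the values of \<phi>(p_n).\<close>

lemma fps_deriv_eq_mult_deriv_fps_log1:
  assumes "f $ 0 = 1"
  shows "fps_deriv f = f * fps_deriv (fps_log1 f)"
proof -
  have g0: "(f - 1) $ 0 = 0" using assms by simp
  have "(1 + fps_X) oo (f - 1) = f"
    by (simp only: fps_compose_add_distrib fps_compose_1 fps_X_fps_compose_startby0[OF g0]) simp
  then have "inverse (1 + fps_X) oo (f - 1) = inverse f"
    using fps_inverse_compose[OF g0, of "1 + fps_X"] by simp
  then have "fps_deriv (fps_log1 f) = inverse f * fps_deriv f"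
    by (simp add: fps_log1_def fps_compose_deriv[OF g0] fps_ln_deriv)
  then show ?thesis
    using assms by (simp add: inverse_mult_eq_1' flip: mult.assoc)
qed

definition fps_pconst :: "'a::zero fps \<Rightarrow> 'a poly fps" where
  "fps_pconst f = Abs_fps (\<lambda>k. [:f $ k:])"

lemma fps_pconst_nth [simp]: "fps_pconst f $ k = [:f $ k:]"
  by (simp add: fps_pconst_def)

lemma const_poly_sum: "[:sum f S:] = (\<Sum>i\<in>S. [:f i:])"
  by (rule poly_eqI) (simp add: coeff_sum coeff_pCons split: nat.split)

lemma fps_pconst_mult:
  fixes f g :: "'a::comm_semiring_1 fps"
  shows "fps_pconst (f * g) = fps_pconst f * fps_pconst g"
  by (rule fps_ext) (simp add: fps_mult_nth const_poly_sum mult_to_poly mult.commute)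

lemma fps_deriv_fps_pconst:
  fixes f :: "'a::comm_semiring_1 fps"
  shows "fps_deriv (fps_pconst f) = fps_pconst (fps_deriv f)"
  by (rule fps_ext) (simp add: of_nat_poly mult_to_poly mult.commute)

lemma pderiv_sum: "pderiv (sum f S) = (\<Sum>i\<in>S. pderiv (f i))"
  using higher_pderiv_sum[of 1] by simp

text \<open>The series e^{xt} in t, whose coefficients are polynomials in x.\<close>

definition fps_exp_x :: "'a::field_char_0 poly fps" where
  "fps_exp_x = Abs_fps (\<lambda>n. monom (1 / fact n) n)"

lemma fps_exp_x_nth_0 [simp]: "fps_exp_x $ 0 = 1"
  by (simp add: fps_exp_x_def)

lemma of_nat_Suc_div_fact_Suc:
  "of_nat (Suc n) * (1 / fact (Suc n)) = (1 / fact n :: 'a::field_char_0)"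
  by (simp add: fact_Suc del: of_nat_Suc)

lemma pderiv_fps_exp_x_nth: "pderiv (fps_exp_x $ Suc n) = (fps_exp_x $ n :: 'a::field_char_0 poly)"
  by (simp add: fps_exp_x_def pderiv_monom smult_monom of_nat_Suc_div_fact_Suc del: of_nat_Suc)

lemma fps_deriv_fps_exp_x:
  "fps_deriv fps_exp_x = fps_const [:0, 1:] * (fps_exp_x :: 'a::field_char_0 poly fps)"
  by (rule fps_ext)
    (simp add: fps_exp_x_def of_nat_poly smult_monom of_nat_Suc_div_fact_Suc monom_Suc
      del: of_nat_Suc)

section \<open>The exponential generating function of an Appell sequence\<close>

lemma appell_eqI:
  assumes "appell A" "appell B" "\<And>n. poly (A n) 0 = poly (B n) 0"
  shows "A = B"
proof
  fix n show "A n = B n"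
  proof (induction n)
    case 0
    show ?case using assms(1,2) by (simp add: appell_def)
  next
    case (Suc n)
    have "pderiv (A (Suc n) - B (Suc n)) = 0"
      using assms(1,2) Suc.IH by (simp add: appell_def pderiv_diff)
    then obtain c where "A (Suc n) - B (Suc n) = [:c:]"
      by (meson pderiv_eq_0_iff degree_eq_zeroE)
    moreover have "poly (A (Suc n) - B (Suc n)) 0 = 0"
      using assms(3) by simp
    ultimately show ?case by simp
  qed
qed

lemma pderiv_fps_exp_x_mult_nth:
  "pderiv ((fps_exp_x * fps_pconst g) $ Suc n) = (fps_exp_x * fps_pconst g) $ n"
proof -
  have split: "(fps_exp_x * fps_pconst g) $ Suc n =
      smult (g $ Suc n) (fps_exp_x $ 0) + (\<Sum>i\<le>n. smult (g $ (n - i)) (fps_exp_x $ Suc i))"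
    unfolding fps_mult_nth atLeast0AtMost sum.atMost_Suc_shift by simp
  show ?thesis
    unfolding split
    by (simp add: pderiv_add pderiv_sum pderiv_smult pderiv_fps_exp_x_nth fps_mult_nth
        atLeast0AtMost)
qed

lemma poly_fps_exp_x_mult_nth_0: "poly ((fps_exp_x * fps_pconst g) $ n) 0 = g $ n"
  by (simp add: fps_mult_nth poly_sum fps_exp_x_def poly_monom power_0_left if_distrib sum.If_cases)

definition appell_egf :: "(nat \<Rightarrow> real poly) \<Rightarrow> real poly fps" where
  "appell_egf A = Abs_fps (\<lambda>n. smult (1 / fact n) (A n))"

lemma appell_f_nth_0: "appell A \<Longrightarrow> appell_f A $ 0 = 1"
  by (simp add: appell_def appell_f_def)

lemma appell_egf_eq:
  assumes "appell A"
  shows "appell_egf A = fps_exp_x * fps_pconst (appell_f A)"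
proof -
  define B where "B n = smult (fact n) ((fps_exp_x * fps_pconst (appell_f A)) $ n)" for n
  have B: "appell B"
    unfolding appell_def
  proof (intro conjI allI impI)
    show "B 0 = 1"
      by (simp add: B_def appell_f_nth_0[OF assms])
  next
    fix n :: nat assume "n \<ge> 1"
    then obtain k where "n = Suc k" by (cases n) auto
    then show "pderiv (B n) = smult (real n) (B (n - 1))"
      by (simp add: B_def pderiv_smult pderiv_fps_exp_x_mult_nth del: of_nat_Suc)
  qed
  have "A = B"
    by (rule appell_eqI[OF assms B]) (simp add: B_def poly_fps_exp_x_mult_nth_0 appell_f_def)
  then show ?thesis
    by (intro fps_ext) (simp add: appell_egf_def B_def)
qed

lemma fps_deriv_appell_egf:
  assumes "appell A"
  shows "fps_deriv (appell_egf A) =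
    (fps_const [:0, 1:] + fps_pconst (fps_deriv (fps_log1 (appell_f A)))) * appell_egf A"
proof -
  let ?E = "fps_exp_x :: real poly fps"
  let ?F = "fps_pconst (appell_f A)"
  let ?L = "fps_pconst (fps_deriv (fps_log1 (appell_f A)))"
  have "fps_deriv ?F = ?F * ?L"
    using fps_deriv_eq_mult_deriv_fps_log1[OF appell_f_nth_0[OF assms]]
    by (metis fps_deriv_fps_pconst fps_pconst_mult)
  then have "fps_deriv (?E * ?F) = fps_const [:0, 1:] * (?E * ?F) + ?L * (?E * ?F)"
    by (simp add: fps_deriv_fps_exp_x algebra_simps)
  then show ?thesis
    by (simp add: appell_egf_eq[OF assms] distrib_right)
qed

section \<open>Newton's identity in the ring of symmetric functions\<close>

lemma mdeg_add: "mdeg (\<alpha> + \<beta>) = mdeg \<alpha> + mdeg \<beta>"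
  unfolding mdeg_def by (rule setsum_keys_plus_distrib[where f = "\<lambda>_ n. n"]) simp_all

lemma mdeg_single: "mdeg (Poly_Mapping.single i k) = k"
  by (cases "k = 0") (simp_all add: mdeg_def)

lemma mdeg_eq_0_iff: "mdeg \<alpha> = 0 \<longleftrightarrow> \<alpha> = 0"
  by (auto simp: mdeg_def poly_mapping_eq_iff fun_eq_iff in_keys_iff)

lemma lookup_le_mdeg: "Poly_Mapping.lookup \<alpha> i \<le> mdeg \<alpha>"
  by (cases "i \<in> Poly_Mapping.keys \<alpha>") (auto simp: mdeg_def in_keys_iff intro: member_le_sum)

lemma finite_add_decompositions: "finite {(\<beta>, \<gamma>). \<beta> + \<gamma> = (\<alpha> :: nat \<Rightarrow>\<^sub>0 nat)}"
proof -
  let ?B = "{\<beta>. \<exists>\<gamma>. \<beta> + \<gamma> = \<alpha>}"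
  let ?F = "{f. \<forall>i. (i \<in> Poly_Mapping.keys \<alpha> \<longrightarrow> f i \<in> {0..mdeg \<alpha>}) \<and>
                     (i \<notin> Poly_Mapping.keys \<alpha> \<longrightarrow> f i = 0)}"
  have le: "Poly_Mapping.lookup \<beta> i \<le> Poly_Mapping.lookup \<alpha> i" if "\<beta> \<in> ?B" for \<beta> i
    using that by (auto simp: lookup_add)
  have "Poly_Mapping.lookup ` ?B \<subseteq> ?F"
  proof
    fix f assume "f \<in> Poly_Mapping.lookup ` ?B"
    then obtain \<beta> where "\<beta> \<in> ?B" "f = Poly_Mapping.lookup \<beta>"
      by blast
    then show "f \<in> ?F"
      using le lookup_le_mdeg[of \<alpha>] by (auto simp: in_keys_iff) (metis le_trans, metis le_zero_eq)
  qed
  moreover have "finite ?F"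
    by (rule finite_set_of_finite_funs) auto
  ultimately have "finite (Poly_Mapping.lookup ` ?B)"
    by (rule finite_subset)
  then have "finite ?B"
    by (rule finite_imageD) (rule inj_onI, rule poly_mapping_eqI, simp)
  moreover have "{(\<beta>, \<gamma>). \<beta> + \<gamma> = \<alpha>} \<subseteq> (\<lambda>\<beta>. (\<beta>, \<alpha> - \<beta>)) ` ?B"
    by (auto simp: image_iff)
  ultimately show ?thesis
    by (meson finite_imageI finite_subset)
qed

lemma bij_betw_permuted_lookup:
  assumes "bij \<sigma>" "\<forall>i. Poly_Mapping.lookup \<beta> i = Poly_Mapping.lookup \<alpha> (\<sigma> i)"
  shows "bij_betw \<sigma> {i. P (Poly_Mapping.lookup \<beta> i)} {i. P (Poly_Mapping.lookup \<alpha> i)}"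
proof (rule bij_betw_imageI)
  show "inj_on \<sigma> {i. P (Poly_Mapping.lookup \<beta> i)}"
    using assms(1) bij_is_inj inj_on_subset by blast
  show "\<sigma> ` {i. P (Poly_Mapping.lookup \<beta> i)} = {i. P (Poly_Mapping.lookup \<alpha> i)}"
    using assms by (auto simp: image_iff) (metis bij_inv_eq_iff)
qed

lemma mdeg_permuted:
  assumes "bij \<sigma>" "\<forall>i. Poly_Mapping.lookup \<beta> i = Poly_Mapping.lookup \<alpha> (\<sigma> i)"
  shows "mdeg \<beta> = mdeg \<alpha>"
proof -
  have keys_eq: "Poly_Mapping.keys \<gamma> = {i. Poly_Mapping.lookup \<gamma> i \<noteq> 0}" for \<gamma> :: "nat \<Rightarrow>\<^sub>0 nat"
    by (auto simp: in_keys_iff)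
  have "bij_betw \<sigma> (Poly_Mapping.keys \<beta>) (Poly_Mapping.keys \<alpha>)"
    unfolding keys_eq by (rule bij_betw_permuted_lookup[OF assms])
  then show ?thesis
    unfolding mdeg_def using assms(2) by (simp flip: sum.reindex_bij_betw)
qed

lemma card_lookup_ge_permuted:
  assumes "bij \<sigma>" "\<forall>i. Poly_Mapping.lookup \<beta> i = Poly_Mapping.lookup \<alpha> (\<sigma> i)"
  shows "card {i. k \<le> Poly_Mapping.lookup \<beta> i} = card {i. k \<le> Poly_Mapping.lookup \<alpha> i}"
  using bij_betw_permuted_lookup[OF assms] by (rule bij_betw_same_card)

lemma single_permuted_iff:
  assumes "bij \<sigma>" "\<forall>i. Poly_Mapping.lookup \<beta> i = Poly_Mapping.lookup \<alpha> (\<sigma> i)"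
  shows "\<beta> = Poly_Mapping.single i n \<longleftrightarrow> \<alpha> = Poly_Mapping.single (\<sigma> i) n"
  using assms
  by (auto simp: poly_mapping_eq_iff fun_eq_iff lookup_single when_def bij_def inj_eq)
    (metis surj_f_inv_f)

lemma sf_h_in_Lambda: "sf_h m \<in> Lambda"
  by (auto simp: Lambda_def sf_symmetric_def sf_bounded_degree_def sf_h_def dest: mdeg_permuted)

lemma sf_p_in_Lambda: "sf_p n \<in> Lambda"
proof -
  have single_iff: "(\<exists>i. \<beta> = Poly_Mapping.single i n) \<longleftrightarrow> (\<exists>i. \<alpha> = Poly_Mapping.single i n)"
    if "bij \<sigma>" "\<forall>i. Poly_Mapping.lookup \<beta> i = Poly_Mapping.lookup \<alpha> (\<sigma> i)"
    for \<sigma> :: "nat \<Rightarrow> nat" and \<alpha> \<beta>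
    using single_permuted_iff[OF that] \<open>bij \<sigma>\<close> by (metis bij_inv_eq_iff)
  then show ?thesis
    unfolding Lambda_def sf_symmetric_def sf_bounded_degree_def sf_p_def
    by (auto simp: mdeg_single dest: single_iff)
qed

lemma sf_add_in_Lambda:
  assumes "f \<in> Lambda" "g \<in> Lambda"
  shows "sf_add f g \<in> Lambda"
proof -
  obtain d e where d: "\<forall>\<alpha>. f \<alpha> \<noteq> 0 \<longrightarrow> mdeg \<alpha> \<le> d"
    and e: "\<forall>\<alpha>. g \<alpha> \<noteq> 0 \<longrightarrow> mdeg \<alpha> \<le> e"
    using assms unfolding Lambda_def sf_bounded_degree_def by blast
  have "sf_bounded_degree (sf_add f g)"
    unfolding sf_bounded_degree_def
  proof (intro exI allI impI)
    fix \<alpha> assume "sf_add f g \<alpha> \<noteq> 0"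
    then have "f \<alpha> \<noteq> 0 \<or> g \<alpha> \<noteq> 0"
      by (auto simp: sf_add_def)
    then show "mdeg \<alpha> \<le> max d e"
      using d e by auto
  qed
  moreover have "sf_symmetric (sf_add f g)"
    using assms unfolding Lambda_def sf_symmetric_def sf_add_def
    by (simp only: mem_Collect_eq) metis
  ultimately show ?thesis
    by (simp add: Lambda_def)
qed

lemma zero_in_Lambda: "(\<lambda>_. 0) \<in> Lambda"
  by (simp add: Lambda_def sf_symmetric_def sf_bounded_degree_def)

lemma ring_hom_Lambda_zero:
  assumes "ring_hom_Lambda \<phi>"
  shows "\<phi> (\<lambda>_. 0) = 0"
proof -
  have "sf_add (\<lambda>_. 0) (\<lambda>_. 0) = (\<lambda>_. 0)"
    by (rule ext) (simp add: sf_add_def)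
  then have "\<phi> (\<lambda>_. 0) = \<phi> (sf_add (\<lambda>_. 0) (\<lambda>_. 0))"
    by simp
  also have "\<dots> = \<phi> (\<lambda>_. 0) + \<phi> (\<lambda>_. 0)"
    using assms zero_in_Lambda by (simp add: ring_hom_Lambda_def)
  finally show ?thesis
    by simp
qed

text \<open>Finite sums are built from sf_add, the only additivity that ring_hom_Lambda provides.\<close>

definition sf_sum :: "('i \<Rightarrow> sfun) \<Rightarrow> 'i set \<Rightarrow> sfun" where
  "sf_sum F S \<alpha> = (\<Sum>i\<in>S. F i \<alpha>)"

lemma sf_sum_empty [simp]: "sf_sum F {} = (\<lambda>_. 0)"
  by (simp add: sf_sum_def fun_eq_iff)

lemma sf_sum_insert [simp]:
  "finite S \<Longrightarrow> i \<notin> S \<Longrightarrow> sf_sum F (insert i S) = sf_add (F i) (sf_sum F S)"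
  by (simp add: sf_sum_def sf_add_def fun_eq_iff)

lemma sf_sum_in_Lambda:
  "finite S \<Longrightarrow> (\<And>i. i \<in> S \<Longrightarrow> F i \<in> Lambda) \<Longrightarrow> sf_sum F S \<in> Lambda"
  by (induction S rule: finite_induct) (simp_all add: zero_in_Lambda sf_add_in_Lambda)

lemma ring_hom_Lambda_sf_sum:
  assumes "ring_hom_Lambda \<phi>" "finite S" "\<And>i. i \<in> S \<Longrightarrow> F i \<in> Lambda"
  shows "\<phi> (sf_sum F S) = (\<Sum>i\<in>S. \<phi> (F i))"
  using assms(2,3)
proof (induction S rule: finite_induct)
  case empty
  then show ?case
    using ring_hom_Lambda_zero[OF assms(1)] by simp
next
  case (insert i S)
  then show ?case
    using assms(1) sf_sum_in_Lambda[of S F] by (simp add: ring_hom_Lambda_def)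
qed

lemma card_single_add_decompositions:
  fixes \<alpha> :: "nat \<Rightarrow>\<^sub>0 nat"
  assumes "k \<noteq> 0"
  shows "card {(\<beta>, \<gamma>). \<beta> + \<gamma> = \<alpha> \<and> (\<exists>i. \<beta> = Poly_Mapping.single i k)} =
    card {i. k \<le> Poly_Mapping.lookup \<alpha> i}"
proof -
  let ?d = "\<lambda>i. (Poly_Mapping.single i k, \<alpha> - Poly_Mapping.single i k)"
  have "bij_betw ?d {i. k \<le> Poly_Mapping.lookup \<alpha> i}
      {(\<beta>, \<gamma>). \<beta> + \<gamma> = \<alpha> \<and> (\<exists>i. \<beta> = Poly_Mapping.single i k)}"
  proof (rule bij_betwI')
    fix i j
    show "?d i = ?d j \<longleftrightarrow> i = j"
      using assms by (auto simp: poly_mapping_eq_iff fun_eq_iff lookup_single when_def)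
  next
    fix i assume "i \<in> {i. k \<le> Poly_Mapping.lookup \<alpha> i}"
    then have "Poly_Mapping.single i k + (\<alpha> - Poly_Mapping.single i k) = \<alpha>"
      by (intro poly_mapping_eqI) (auto simp: lookup_add lookup_minus lookup_single when_def)
    then show "?d i \<in> {(\<beta>, \<gamma>). \<beta> + \<gamma> = \<alpha> \<and> (\<exists>i. \<beta> = Poly_Mapping.single i k)}"
      by auto
  next
    fix \<delta> assume "\<delta> \<in> {(\<beta>, \<gamma>). \<beta> + \<gamma> = \<alpha> \<and> (\<exists>i. \<beta> = Poly_Mapping.single i k)}"
    then obtain i \<gamma> where \<delta>: "\<delta> = (Poly_Mapping.single i k, \<gamma>)" "Poly_Mapping.single i k + \<gamma> = \<alpha>"
      by auto
    then have "k \<le> Poly_Mapping.lookup \<alpha> i" "\<gamma> = \<alpha> - Poly_Mapping.single i k"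
      by (auto simp: lookup_add)
    with \<delta> show "\<exists>i\<in>{i. k \<le> Poly_Mapping.lookup \<alpha> i}. \<delta> = ?d i"
      by auto
  qed
  then show ?thesis
    by (simp add: bij_betw_same_card)
qed

lemma sf_mult_sf_p_sf_h:
  assumes "k \<noteq> 0"
  shows "sf_mult (sf_p k) (sf_h r) \<alpha> =
    (if mdeg \<alpha> = k + r then int (card {i. k \<le> Poly_Mapping.lookup \<alpha> i}) else 0)"
proof -
  let ?D = "{(\<beta>, \<gamma>). \<beta> + \<gamma> = \<alpha>}"
  let ?S = "{(\<beta>, \<gamma>). \<beta> + \<gamma> = \<alpha> \<and> (\<exists>i. \<beta> = Poly_Mapping.single i k)}"
  have "sf_mult (sf_p k) (sf_h r) \<alpha> =
      (\<Sum>\<delta>\<in>?D. if \<delta> \<in> ?S then (if mdeg \<alpha> = k + r then 1 else 0) else 0)"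
    unfolding sf_mult_def
  proof (rule sum.cong)
    fix \<delta> assume "\<delta> \<in> ?D"
    then obtain \<beta> \<gamma> where "\<delta> = (\<beta>, \<gamma>)" "\<beta> + \<gamma> = \<alpha>"
      by auto
    then show "(case \<delta> of (\<beta>, \<gamma>) \<Rightarrow> sf_p k \<beta> * sf_h r \<gamma>) =
        (if \<delta> \<in> ?S then (if mdeg \<alpha> = k + r then 1 else 0) else 0)"
      by (auto simp: sf_p_def sf_h_def mdeg_add mdeg_single)
  qed simp
  also have "\<dots> = (\<Sum>\<delta>\<in>?S. if mdeg \<alpha> = k + r then 1 else 0)"
    using finite_add_decompositions[of \<alpha>] by (simp add: sum.If_cases Int_absorb1 subset_iff)
  also have "\<dots> = (if mdeg \<alpha> = k + r then int (card ?S) else 0)"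
    by simp
  finally show ?thesis
    by (simp only: card_single_add_decompositions[OF assms])
qed

lemma sf_mult_sf_p_sf_h_in_Lambda:
  assumes "k \<noteq> 0"
  shows "sf_mult (sf_p k) (sf_h r) \<in> Lambda"
  unfolding Lambda_def sf_symmetric_def sf_bounded_degree_def sf_mult_sf_p_sf_h[OF assms]
  by (auto dest: mdeg_permuted card_lookup_ge_permuted[where k = k])

text \<open>Layer-cake counting: each exponent a_i \<le> n equals #{k \<in> {1..n}. k \<le> a_i}.\<close>

lemma sum_card_lookup_ge:
  assumes "mdeg \<alpha> \<le> n"
  shows "(\<Sum>k=1..n. card {i. k \<le> Poly_Mapping.lookup \<alpha> i}) = mdeg \<alpha>"
proof -
  have "card {i. k \<le> Poly_Mapping.lookup \<alpha> i} =
      (\<Sum>i\<in>Poly_Mapping.keys \<alpha>. if k \<le> Poly_Mapping.lookup \<alpha> i then 1 else 0)"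
    if "k \<in> {1..n}" for k
  proof -
    have "{i. k \<le> Poly_Mapping.lookup \<alpha> i} = {i \<in> Poly_Mapping.keys \<alpha>. k \<le> Poly_Mapping.lookup \<alpha> i}"
      using that by (auto simp: in_keys_iff)
    then show ?thesis
      by (simp add: sum.inter_filter[symmetric])
  qed
  then have "(\<Sum>k=1..n. card {i. k \<le> Poly_Mapping.lookup \<alpha> i}) =
      (\<Sum>i\<in>Poly_Mapping.keys \<alpha>. \<Sum>k=1..n. if k \<le> Poly_Mapping.lookup \<alpha> i then 1 else 0)"
    by (simp add: sum.swap[where B = "Poly_Mapping.keys \<alpha>"])
  also have "\<dots> = (\<Sum>i\<in>Poly_Mapping.keys \<alpha>. Poly_Mapping.lookup \<alpha> i)"
  proof (rule sum.cong)
    fix i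
    have "{k \<in> {1..n}. k \<le> Poly_Mapping.lookup \<alpha> i} = {1..Poly_Mapping.lookup \<alpha> i}"
      using lookup_le_mdeg[of \<alpha> i] assms by auto
    then show "(\<Sum>k=1..n. if k \<le> Poly_Mapping.lookup \<alpha> i then 1 else 0) = Poly_Mapping.lookup \<alpha> i"
      by (simp add: sum.inter_filter[symmetric])
  qed simp
  finally show ?thesis
    by (simp add: mdeg_def)
qed

lemma newton_identity:
  "sf_sum (\<lambda>_. sf_h n) {1..n} = sf_sum (\<lambda>k. sf_mult (sf_p k) (sf_h (n - k))) {1..n}"
proof
  fix \<alpha>
  show "sf_sum (\<lambda>_. sf_h n) {1..n} \<alpha> = sf_sum (\<lambda>k. sf_mult (sf_p k) (sf_h (n - k))) {1..n} \<alpha>"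
  proof (cases "mdeg \<alpha> = n")
    case True
    then have "sf_sum (\<lambda>k. sf_mult (sf_p k) (sf_h (n - k))) {1..n} \<alpha> =
        (\<Sum>k=1..n. int (card {i. k \<le> Poly_Mapping.lookup \<alpha> i}))"
      unfolding sf_sum_def by (intro sum.cong) (auto simp: sf_mult_sf_p_sf_h)
    also have "\<dots> = int n"
      using sum_card_lookup_ge[of \<alpha> n] True by (simp flip: of_nat_sum)
    finally show ?thesis
      using True by (simp add: sf_sum_def sf_h_def)
  next
    case False
    then show ?thesis
      by (simp add: sf_sum_def sf_h_def sf_mult_sf_p_sf_h)
  qed
qed

lemma fps_deriv_sf_h_series:
  fixes \<phi> :: "sfun \<Rightarrow> 'b::comm_ring_1"
  assumes "ring_hom_Lambda \<phi>"
  shows "fps_deriv (Abs_fps (\<lambda>n. \<phi> (sf_h n))) =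
    Abs_fps (\<lambda>n. \<phi> (sf_p (Suc n))) * Abs_fps (\<lambda>n. \<phi> (sf_h n))"
proof (rule fps_ext)
  fix m
  let ?n = "Suc m"
  have "of_nat ?n * \<phi> (sf_h ?n) = (\<Sum>k=1..?n. \<phi> (sf_h ?n))"
    by simp
  also have "\<dots> = \<phi> (sf_sum (\<lambda>_. sf_h ?n) {1..?n})"
    by (rule ring_hom_Lambda_sf_sum[OF assms, symmetric]) (auto intro: sf_h_in_Lambda)
  also have "\<dots> = \<phi> (sf_sum (\<lambda>k. sf_mult (sf_p k) (sf_h (?n - k))) {1..?n})"
    by (simp only: newton_identity)
  also have "\<dots> = (\<Sum>k=1..?n. \<phi> (sf_mult (sf_p k) (sf_h (?n - k))))"
    by (rule ring_hom_Lambda_sf_sum[OF assms]) (auto intro: sf_mult_sf_p_sf_h_in_Lambda)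
  also have "\<dots> = (\<Sum>k=1..?n. \<phi> (sf_p k) * \<phi> (sf_h (?n - k)))"
    using assms sf_p_in_Lambda sf_h_in_Lambda by (simp add: ring_hom_Lambda_def)
  also have "\<dots> = (\<Sum>j\<le>m. \<phi> (sf_p (Suc j)) * \<phi> (sf_h (m - j)))"
    unfolding One_nat_def sum.atLeast_Suc_atMost_Suc_shift atLeast0AtMost by simp
  finally show "fps_deriv (Abs_fps (\<lambda>n. \<phi> (sf_h n))) $ m =
      (Abs_fps (\<lambda>n. \<phi> (sf_p (Suc n))) * Abs_fps (\<lambda>n. \<phi> (sf_h n))) $ m"
    by (simp add: fps_mult_nth atLeast0AtMost)
qed

lemma sf_h_0: "sf_h 0 = sf_one"
  by (auto simp: sf_h_def sf_one_def mdeg_eq_0_iff fun_eq_iff)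

theorem proposition4p3:
  fixes A :: "nat \<Rightarrow> real poly" and \<phi> :: "sfun \<Rightarrow> real poly"
  assumes "appell A"
    and "ring_hom_Lambda \<phi>"
    and "\<And>m. m \<ge> 1 \<Longrightarrow> \<phi> (sf_h m) = smult (1 / fact m) (A m)"
  shows "\<phi> (sf_p 1) = [:appell_c A 1, 1:] \<and>
         (\<forall>n\<ge>2. \<phi> (sf_p n) = [:appell_c A n / fact (n - 1):])"
proof -
  let ?G = "appell_egf A"
  let ?L = "fps_log1 (appell_f A)"
  let ?Q = "fps_const [:0, 1:] + fps_pconst (fps_deriv ?L)"
  have "A 0 = 1"
    using assms(1) by (simp add: appell_def)
  then have G0: "?G $ 0 = 1"
    by (simp add: appell_egf_def)
  have "Abs_fps (\<lambda>n. \<phi> (sf_h n)) = ?G"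
  proof (rule fps_ext)
    fix n
    show "Abs_fps (\<lambda>n. \<phi> (sf_h n)) $ n = ?G $ n"
      using assms(2,3) G0 by (cases n) (auto simp: appell_egf_def sf_h_0 ring_hom_Lambda_def)
  qed
  then have "Abs_fps (\<lambda>n. \<phi> (sf_p (Suc n))) * ?G = fps_deriv ?G"
    using fps_deriv_sf_h_series[OF assms(2)] by metis
  also have "\<dots> = ?Q * ?G"
    by (rule fps_deriv_appell_egf[OF assms(1)])
  finally have "Abs_fps (\<lambda>n. \<phi> (sf_p (Suc n))) * ?G = ?Q * ?G" .
  moreover have "?G \<noteq> 0"
    using G0 by auto
  ultimately have "Abs_fps (\<lambda>n. \<phi> (sf_p (Suc n))) = ?Q"
    by simp
  then have p_Suc: "\<phi> (sf_p (Suc j)) = ?Q $ j" for j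
    by (metis fps_nth_Abs_fps)
  have "\<phi> (sf_p n) = [:appell_c A n / fact (n - 1):]" if "n \<ge> 2" for n
  proof -
    obtain j where "n = Suc j" "j \<noteq> 0"
      using \<open>n \<ge> 2\<close> by (cases n) auto
    then show ?thesis
      using p_Suc[of j] by (simp add: appell_c_def del: of_nat_Suc)
  qed
  moreover have "\<phi> (sf_p 1) = [:appell_c A 1, 1:]"
    using p_Suc[of 0] by (simp add: appell_c_def)
  ultimately show ?thesis
    by blast
qed

end
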